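(* Let $H=(V,E)$ be a path hypergraph with exactly three edges $e_1,e_2,e_3$ (in path order), where the middle edge satisfies $|e_2|=2$ and $|V|\equiv 0\pmod 4$. Then $H$ is not $\mathbb{Z}_2\times\mathbb{Z}_2$-cordial.
   Context: A path hypergraph with edges $e_1,\dots,e_m$ (in this order) is a finite hypergraph $H=(V,E)$ with $E=\{e_1,\dots,e_m\}$, each edge having at least two vertices, $V=e_1\cup\cdots\cup e_m$, $|e_i\cap e_{i+1}|=1$ for $1\le i<m$, and $e_i\cap e_j=\emptyset$ whenever $|i-j|\ge 2$. Let $A=\mathbb{Z}_2\times\mathbb{Z}_2$. For a labeling $c:V\to A$, write $v_c(a)=|c^{-1}(a)|$; $c$ is $A$-friendly if $|v_c(a)-v_c(b)|\le 1$ for all $a,b\in A$. It induces $c^*:E\to A$, $c^*(e)=\sum_{v\in e}c(v)$; write $e_{c^*}(a)=|(c^* )^{-1}(a)|$. $H$ is $A$-cordial if it admits an $A$-friendly labeling $c$ with $|e_{c^*}(a)-e_{c^*}(b)|\le 1$ for all $a,b\in A$. *)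

theory Defs
  imports Main "HOL-Library.Z2" "HOL-Library.Product_Plus"
begin

type_synonym A = "bit \<times> bit"

definition path_hypergraph :: "'v set \<Rightarrow> 'v set list \<Rightarrow> bool" where
  "path_hypergraph V es \<longleftrightarrow>
     es \<noteq> [] \<and>
     (\<forall>e\<in>set es. finite e \<and> card e \<ge> 2) \<and>
     V = \<Union>(set es) \<and>
     (\<forall>i. Suc i < length es \<longrightarrow> card (es ! i \<inter> es ! Suc i) = 1) \<and>
     (\<forall>i j. i < length es \<and> j < length es \<and> i + 2 \<le> j \<longrightarrow> es ! i \<inter> es ! j = {})"

definition vcount :: "'v set \<Rightarrow> ('v \<Rightarrow> A) \<Rightarrow> A \<Rightarrow> nat" where
  "vcount V c a = card {v \<in> V. c v = a}"

definition A_friendly :: "'v set \<Rightarrow> ('v \<Rightarrow> A) \<Rightarrow> bool" where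
  "A_friendly V c \<longleftrightarrow>
     (\<forall>a b. \<bar>int (vcount V c a) - int (vcount V c b)\<bar> \<le> 1)"

definition induced :: "('v \<Rightarrow> A) \<Rightarrow> 'v set \<Rightarrow> A" where
  "induced c e = (\<Sum>v\<in>e. c v)"

definition ecount :: "'v set list \<Rightarrow> ('v \<Rightarrow> A) \<Rightarrow> A \<Rightarrow> nat" where
  "ecount es c a = card {e \<in> set es. induced c e = a}"

definition A_cordial :: "'v set \<Rightarrow> 'v set list \<Rightarrow> bool" where
  "A_cordial V es \<longleftrightarrow>
     (\<exists>c. A_friendly V c \<and>
          (\<forall>a b. \<bar>int (ecount es c a) - int (ecount es c b)\<bar> \<le> 1))"

end

theory Submission
  imports Defs
begin

text \<open>If \<open>|V|\<close> is divisible by 4, a friendly labeling uses every element of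
\<open>\<int>\<^sub>2 \<times> \<int>\<^sub>2\<close> equally often, so the labels of all vertices add up to a multiple of
\<open>(0,0) + (0,1) + (1,0) + (1,1) = 0\<close>. Since \<open>|e\<^sub>2| = 2\<close>, the middle edge consists of the
two junction vertices, so \<open>V\<close> is the disjoint union of \<open>e\<^sub>1\<close> and \<open>e\<^sub>3\<close> and hence
\<open>c\<^sup>*(e\<^sub>1) + c\<^sup>*(e\<^sub>3) = 0\<close>, i.e. \<open>c\<^sup>*(e\<^sub>1) = c\<^sup>*(e\<^sub>3)\<close>. Then at most three of the
four labels occur on the three edges, one of them twice: some label has edge count 0 and
another has edge count 2.\<close>

lemma sum_const_eq_sum_lessThan_card:
  fixes y :: "'a::comm_monoid_add"
  assumes "finite F"
  shows "(\<Sum>_\<in>F. y) = (\<Sum>_<card F. y)"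
  using assms by (induction F rule: finite_induct) (auto simp: add.commute)

lemma balanced_counts_eq_Min:
  fixes f :: "'a \<Rightarrow> nat"
  assumes L: "finite L"
    and balanced: "\<forall>a\<in>L. \<forall>b\<in>L. \<bar>int (f a) - int (f b)\<bar> \<le> 1"
    and dvd: "card L dvd (\<Sum>a\<in>L. f a)"
    and "a \<in> L"
  shows "f a = Min (f ` L)"
proof -
  define m where "m = Min (f ` L)"
  define T where "T = {a\<in>L. f a = Suc m}"
  have "m \<in> f ` L"
    unfolding m_def using L \<open>a \<in> L\<close> by (intro Min_in) auto
  then obtain a0 where a0: "a0 \<in> L" "f a0 = m"
    by auto
  have near_min: "f a = m \<or> f a = Suc m" if "a \<in> L" for a
  proof -
    have "m \<le> f a"
      unfolding m_def using L that by simp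
    moreover have "int (f a) - int (f a0) \<le> 1"
      using balanced that a0(1) by fastforce
    ultimately show ?thesis
      using a0(2) by linarith
  qed
  have "(\<Sum>a\<in>L. f a) = (\<Sum>a\<in>L. m + of_bool (a \<in> T))"
    using near_min unfolding T_def by (intro sum.cong) auto
  also have "\<dots> = card L * m + card T"
    using L by (simp add: sum.distrib T_def Collect_conj_eq)
  finally have "card L dvd card T"
    using dvd by (simp add: dvd_add_right_iff)
  moreover have "card T < card L"
  proof (rule psubset_card_mono)
    show "T \<subset> L"
      using a0 unfolding T_def by force
  qed (rule L)
  ultimately have "card T = 0"
    using nat_dvd_not_less by blast
  then have "T = {}"
    using L by (simp add: T_def)
  then show ?thesis
    using near_min[OF \<open>a \<in> L\<close>] \<open>a \<in> L\<close> unfolding T_def m_def by auto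
qed

lemma sum_balanced_labeling:
  fixes c :: "'v \<Rightarrow> 'a::comm_monoid_add"
  assumes V: "finite V" and L: "finite L" and range: "c ` V \<subseteq> L"
    and counts: "\<forall>a\<in>L. card {v\<in>V. c v = a} = k"
  shows "(\<Sum>v\<in>V. c v) = (\<Sum>_<k. \<Sum>a\<in>L. a)"
proof -
  have "(\<Sum>v\<in>V. c v) = (\<Sum>a\<in>L. \<Sum>v\<in>{v\<in>V. c v = a}. c v)"
    using V L range by (intro sum.group[symmetric]) auto
  also have "\<dots> = (\<Sum>a\<in>L. \<Sum>v\<in>{v\<in>V. c v = a}. a)"
    by (intro sum.cong refl) simp
  also have "\<dots> = (\<Sum>a\<in>L. \<Sum>_<k. a)"
  proof (rule sum.cong[OF refl])
    fix a assume "a \<in> L"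
    have "(\<Sum>v\<in>{v\<in>V. c v = a}. a) = (\<Sum>_<card {v\<in>V. c v = a}. a)"
      using V by (intro sum_const_eq_sum_lessThan_card) simp
    also have "card {v\<in>V. c v = a} = k"
      using counts \<open>a \<in> L\<close> by blast
    finally show "(\<Sum>v\<in>{v\<in>V. c v = a}. a) = (\<Sum>_<k. a)" .
  qed
  also have "\<dots> = (\<Sum>_<k. \<Sum>a\<in>L. a)"
    by (rule sum.swap)
  finally show ?thesis .
qed

lemma UNIV_bit_prod: "(UNIV :: A set) = {(0,0), (0,1), (1,0), (1,1)}"
proof -
  have "x \<in> {(0,0), (0,1), (1,0), (1,1)}" for x :: A
    by (cases x; cases "fst x"; cases "snd x") auto
  then show ?thesis
    by blast
qed

lemma finite_UNIV_bit_prod: "finite (UNIV :: A set)"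
  by (simp add: UNIV_bit_prod)

lemma card_UNIV_bit_prod: "card (UNIV :: A set) = 4"
  by (simp add: UNIV_bit_prod)

lemma sum_UNIV_bit_prod: "(\<Sum>a\<in>UNIV. a) = (0::A)"
  by (simp add: UNIV_bit_prod zero_prod_def)

lemma bit_prod_add_eq_0_iff: "(a::A) + b = 0 \<longleftrightarrow> a = b"
  by (cases a; cases b) (auto simp: zero_prod_def)

lemma card_eq_sum_vcount:
  assumes "finite V"
  shows "card V = (\<Sum>a\<in>UNIV. vcount V c a)"
proof -
  have "card V = (\<Sum>v\<in>V. 1)"
    by simp
  also have "\<dots> = (\<Sum>a\<in>UNIV. \<Sum>v\<in>{v\<in>V. c v = a}. 1)"
    using assms finite_UNIV_bit_prod by (intro sum.group[symmetric]) auto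
  finally show ?thesis
    by (simp add: vcount_def)
qed

lemma friendly_vcount_eq_Min:
  assumes "finite V" and "A_friendly V c" and "4 dvd card V"
  shows "vcount V c a = Min (range (vcount V c))"
proof (rule balanced_counts_eq_Min[OF finite_UNIV_bit_prod])
  show "\<forall>a\<in>UNIV. \<forall>b\<in>UNIV. \<bar>int (vcount V c a) - int (vcount V c b)\<bar> \<le> 1"
    using \<open>A_friendly V c\<close> unfolding A_friendly_def by blast
  show "card (UNIV :: A set) dvd (\<Sum>a\<in>UNIV. vcount V c a)"
    unfolding card_UNIV_bit_prod card_eq_sum_vcount[OF \<open>finite V\<close>, symmetric]
    by (rule \<open>4 dvd card V\<close>)
qed simp

lemma friendly_label_sum_eq_0:
  assumes "finite V" and "A_friendly V c" and "4 dvd card V"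
  shows "(\<Sum>v\<in>V. c v) = 0"
proof -
  let ?k = "Min (range (vcount V c))"
  have "(\<Sum>v\<in>V. c v) = (\<Sum>_<?k. \<Sum>a\<in>UNIV. a)"
  proof (rule sum_balanced_labeling[OF \<open>finite V\<close> finite_UNIV_bit_prod])
    show "\<forall>a\<in>UNIV. card {v \<in> V. c v = a} = ?k"
      using friendly_vcount_eq_Min[OF assms] unfolding vcount_def by blast
  qed simp
  also have "\<dots> = 0"
    unfolding sum_UNIV_bit_prod by simp
  finally show ?thesis .
qed

lemma path3_outer_edges_partition:
  assumes path: "path_hypergraph V [e1, e2, e3]" and "card e2 = 2"
  shows "V = e1 \<union> e3" and "e1 \<inter> e3 = {}" and "e1 \<noteq> e3" and "finite V"
proof -
  have fin: "finite e1" "finite e2" "finite e3" and "card e1 \<ge> 2"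
    and V: "V = e1 \<union> e2 \<union> e3"
    using path unfolding path_hypergraph_def by auto
  let ?es = "[e1, e2, e3]"
  have consecutive: "\<forall>i. Suc i < length ?es \<longrightarrow> card (?es ! i \<inter> ?es ! Suc i) = 1"
    and separated: "\<forall>i j. i < length ?es \<and> j < length ?es \<and> i + 2 \<le> j \<longrightarrow> ?es ! i \<inter> ?es ! j = {}"
    using path unfolding path_hypergraph_def by blast+
  have "card (e1 \<inter> e2) = 1" and "card (e2 \<inter> e3) = 1"
    using consecutive[rule_format, of 0] consecutive[rule_format, of 1] by simp_all
  then obtain x y where x: "e1 \<inter> e2 = {x}" and y: "e2 \<inter> e3 = {y}"
    by (meson card_1_singletonE)
  show disjoint: "e1 \<inter> e3 = {}"
    using separated[rule_format, of 0 2] by simp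
  then have "x \<noteq> y"
    using x y by blast
  then have "e2 = {x, y}"
    using x y fin(2) \<open>card e2 = 2\<close> by (intro card_subset_eq[symmetric]) auto
  then show "V = e1 \<union> e3"
    using V x y by blast
  then show "finite V"
    using fin by simp
  show "e1 \<noteq> e3"
    using disjoint \<open>card e1 \<ge> 2\<close> by auto
qed

lemma repeated_edge_label_unbalanced:
  assumes "card (set es) \<le> 4" and "e \<in> set es" and "e' \<in> set es" and "e \<noteq> e'"
    and "induced c e = induced c e'"
  shows "\<not> (\<forall>a b. \<bar>int (ecount es c a) - int (ecount es c b)\<bar> \<le> 1)"
proof -
  have "\<not> inj_on (induced c) (set es)"
    using assms(2-5) by (auto dest: inj_onD)
  then have "card (induced c ` set es) < card (UNIV :: A set)"
    using assms(1) card_image_le[of "set es" "induced c"]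
    by (simp add: inj_on_iff_eq_card card_UNIV_bit_prod)
  then have "induced c ` set es \<noteq> UNIV"
    by auto
  then obtain b where b: "b \<notin> induced c ` set es"
    by blast
  have "ecount es c b = 0"
    using b unfolding ecount_def by auto
  moreover have "ecount es c (induced c e) \<ge> 2"
  proof -
    have "{e, e'} \<subseteq> {x \<in> set es. induced c x = induced c e}"
      using assms(2-5) by auto
    then have "card {e, e'} \<le> ecount es c (induced c e)"
      unfolding ecount_def by (intro card_mono) simp_all
    then show ?thesis
      using \<open>e \<noteq> e'\<close> by simp
  qed
  ultimately have "\<bar>int (ecount es c (induced c e)) - int (ecount es c b)\<bar> > 1"
    by simp
  then show ?thesis
    by (meson not_le)
qed

theorem proposition7:
  fixes V :: "'v set" and e1 e2 e3 :: "'v set"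
  assumes "path_hypergraph V [e1, e2, e3]"
    and "card e2 = 2"
    and "card V mod 4 = 0"
  shows "\<not> A_cordial V [e1, e2, e3]"
proof
  assume "A_cordial V [e1, e2, e3]"
  then obtain c where friendly: "A_friendly V c"
    and balanced: "\<forall>a b. \<bar>int (ecount [e1, e2, e3] c a) - int (ecount [e1, e2, e3] c b)\<bar> \<le> 1"
    unfolding A_cordial_def by blast
  note partition = path3_outer_edges_partition[OF assms(1,2)]
  have "induced c e1 + induced c e3 = (\<Sum>v\<in>V. c v)"
    using partition by (simp add: induced_def sum.union_disjoint)
  also have "\<dots> = 0"
    using partition(4) friendly assms(3) by (intro friendly_label_sum_eq_0) auto
  finally have same_label: "induced c e1 = induced c e3"
    by (simp add: bit_prod_add_eq_0_iff)
  have "card (set [e1, e2, e3]) \<le> 4"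
    by (rule order_trans[OF card_length]) simp
  then have "\<not> (\<forall>a b. \<bar>int (ecount [e1, e2, e3] c a) - int (ecount [e1, e2, e3] c b)\<bar> \<le> 1)"
    by (rule repeated_edge_label_unbalanced[OF _ _ _ partition(3) same_label]) simp_all
  then show False
    using balanced by blast
qed

end
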